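(* Let $M$ be a finite-dimensional smooth manifold and $E$ a locally convex space. If a sequence $(f_n)_{n\in\mathbb{N}}$ in $C^\infty_{vS}(M,E)$ converges in the very strong topology to $f\in C^\infty(M,E)$, then there exist a compact set $K\subseteq M$ and $N\in\mathbb{N}$ such that $\{y\in M: f_n(y)\neq f(y)\}\subseteq K$ for all $n\geq N$.
   Context: Conventions: finite-dimensional manifolds are smooth, Hausdorff and $\sigma$-compact. Locally convex spaces are real Hausdorff locally convex topological vector spaces; differentiability is in the sense of Bastiani (Keller $C^r$-theory): for $U\subseteq E$ open and $f\colon U\to F$, $d^{(k)}f(x;y_1,\dots,y_k)=D_{y_k}\cdots D_{y_1}f(x)$ is the iterated directional derivative, and $f$ is smooth if all these exist and are continuous on $U\times E^k$ (and $f$ is continuous); manifolds modeled on locally convex spaces and smooth maps between them are defined via charts with smooth transition maps. Let $M$ be a finite-dimensional manifold of dimension $m$ and $e_1,\dots,e_m$ the standard basis of $\mathbb{R}^m$. For a locally convex space $E$, a continuous seminorm $p$ on $E$, an open $W\subseteq\mathbb{R}^m$, a smooth $g\colon W\to E$, a compact $A\subseteq W$ and $r\in\mathbb{N}_0$ put $\|g\|(r,A,p)=\sup\{p(d^{(k)}g(a;\alpha)) : a\in A,\ \alpha\in\{e_1,\dots,e_m\}^k,\ 0\le k\le r\}$ (for $E=\mathbb{R}^n$ one takes $p=\|\cdot\|_\infty$ and writes $\|g\|(r,A)$). For a manifold $X$ modeled on $E$, $f\in C^\infty(M,X)$, a chart $(U,\phi)$ of $M$, a compact $A\subseteq U$,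 a chart $(V,\psi)$ of $X$ with $f(A)\subseteq V$, a continuous seminorm $p$ on $E$, $r\in\mathbb{N}_0$ and $\epsilon>0$, the elementary neighborhood is $\mathcal{N}^r(f;A,(U,\phi),(V,\psi),p,\epsilon)=\{h\in C^\infty(M,X): h(A)\subseteq V,\ \|\psi\circ h\circ\phi^{-1}-\psi\circ f\circ\phi^{-1}\|(r,\phi(A),p)<\epsilon\}$. A basic neighborhood of $f$ is an intersection $\bigcap_{i\in\Lambda}\mathcal{N}^{r_i}(f;A_i,(U_i,\phi_i),(V_i,\psi_i),p_i,\epsilon_i)$ of elementary neighborhoods of $f$ such that the family $\{A_i\}_{i\in\Lambda}$ is locally finite in $M$. The very strong topology on $C^\infty(M,X)$ is the topology with the basic neighborhoods (of all $f$) as a basis; $C^\infty_{vS}(M,X)$ denotes $C^\infty(M,X)$ with this topology. When source or target is a vector space, its identity chart is used and omitted from the notation. *)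

theory Defs
  imports "HOL-Analysis.Analysis"
begin

definition seminorm :: "('e::real_vector \<Rightarrow> real) \<Rightarrow> bool" where
  "seminorm p \<longleftrightarrow> (\<forall>x y. p (x + y) \<le> p x + p y) \<and> (\<forall>c x. p (c *\<^sub>R x) = \<bar>c\<bar> * p x)"

definition continuous_seminorm :: "('e::{real_vector,topological_space} \<Rightarrow> real) \<Rightarrow> bool" where
  "continuous_seminorm p \<longleftrightarrow> seminorm p \<and> continuous_on UNIV p"

definition locally_convex_space :: "'e::{real_vector,t2_space} itself \<Rightarrow> bool" where
  "locally_convex_space _ \<longleftrightarrow>
     (\<exists>P :: ('e \<Rightarrow> real) set.
        (\<forall>p\<in>P. seminorm p) \<and>
        (\<forall>x. x \<noteq> 0 \<longrightarrow> (\<exists>p\<in>P. p x \<noteq> 0)) \<and>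
        (\<forall>U :: 'e set. open U \<longleftrightarrow>
           (\<forall>x\<in>U. \<exists>F. finite F \<and> F \<subseteq> P \<and> (\<exists>\<epsilon>>0. {y. \<forall>p\<in>F. p (y - x) < \<epsilon>} \<subseteq> U))))"

definition dirderiv :: "('a::real_vector \<Rightarrow> 'e::{real_vector,t2_space}) \<Rightarrow> 'a \<Rightarrow> 'a \<Rightarrow> 'e" where
  "dirderiv g y x = Lim (at (0::real)) (\<lambda>t. (1 / t) *\<^sub>R (g (x + t *\<^sub>R y) - g x))"

definition has_dirderiv :: "('a::real_vector \<Rightarrow> 'e::{real_vector,t2_space}) \<Rightarrow> 'a \<Rightarrow> 'a \<Rightarrow> bool" where
  "has_dirderiv g y x \<longleftrightarrow> (\<exists>v. ((\<lambda>t::real. (1 / t) *\<^sub>R (g (x + t *\<^sub>R y) - g x)) \<longlongrightarrow> v) (at 0))"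

text \<open>ddiff g [y1,...,yk] x = d^(k) g (x; y1,...,yk) = D_yk ... D_y1 g (x).\<close>
fun ddiff :: "('a::real_vector \<Rightarrow> 'e::{real_vector,t2_space}) \<Rightarrow> 'a list \<Rightarrow> 'a \<Rightarrow> 'e" where
  "ddiff g [] = g"
| "ddiff g (y # ys) = ddiff (dirderiv g y) ys"

text \<open>Bastiani smoothness of g on the open set W: all iterated directional derivatives exist on W
  and (x, y1, ..., yk) \<mapsto> d^(k) g (x; y1, ..., yk) is continuous on W \<times> E^k
  (E^k is encoded as sequences vanishing from index k on, with the product topology).\<close>
definition bsmooth_on :: "('a::{real_vector,topological_space}) set \<Rightarrow> ('a \<Rightarrow> 'e::{real_vector,t2_space}) \<Rightarrow> bool" where
  "bsmooth_on W g \<longleftrightarrow> open W \<and>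
     (\<forall>ys y x. x \<in> W \<longrightarrow> has_dirderiv (ddiff g ys) y x) \<and>
     (\<forall>k. continuous_on (W \<times> {ys :: nat \<Rightarrow> 'a. \<forall>i\<ge>k. ys i = 0})
            (\<lambda>(x, ys). ddiff g (map ys [0..<k]) x))"

definition is_chart :: "('m::topological_space set \<times> ('m \<Rightarrow> real^'n)) \<Rightarrow> bool" where
  "is_chart c \<longleftrightarrow> open (fst c) \<and> open (snd c ` fst c) \<and>
     homeomorphism (fst c) (snd c ` fst c) (snd c) (inv_into (fst c) (snd c))"

definition charts_compatible :: "('m::topological_space set \<times> ('m \<Rightarrow> real^'n)) \<Rightarrow> ('m set \<times> ('m \<Rightarrow> real^'n)) \<Rightarrow> bool" where
  "charts_compatible c d \<longleftrightarrow>
     bsmooth_on (snd c ` (fst c \<inter> fst d)) (snd d \<circ> inv_into (fst c) (snd c))"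

text \<open>The whole type 'm is the manifold: Hausdorff (class), sigma-compact, with a smooth atlas A.\<close>
definition smooth_manifold :: "('m::t2_space set \<times> ('m \<Rightarrow> real^'n)) set \<Rightarrow> bool" where
  "smooth_manifold A \<longleftrightarrow>
     (\<exists>Ks :: nat \<Rightarrow> 'm set. (\<forall>i. compact (Ks i)) \<and> (\<Union>i. Ks i) = UNIV) \<and>
     (\<forall>c\<in>A. is_chart c) \<and> (\<Union>c\<in>A. fst c) = UNIV \<and>
     (\<forall>c\<in>A. \<forall>d\<in>A. charts_compatible c d)"

text \<open>Charts of the manifold = charts of the maximal atlas determined by A.\<close>
definition manifold_chart :: "('m::t2_space set \<times> ('m \<Rightarrow> real^'n)) set \<Rightarrow> ('m set \<times> ('m \<Rightarrow> real^'n)) \<Rightarrow> bool" where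
  "manifold_chart A c \<longleftrightarrow> is_chart c \<and> (\<forall>d\<in>A. charts_compatible c d \<and> charts_compatible d c)"

definition smooth_map :: "('m::t2_space set \<times> ('m \<Rightarrow> real^'n)) set \<Rightarrow> ('m \<Rightarrow> 'e::{real_vector,t2_space}) \<Rightarrow> bool" where
  "smooth_map A f \<longleftrightarrow> (\<forall>c\<in>A. bsmooth_on (snd c ` fst c) (f \<circ> inv_into (fst c) (snd c)))"

text \<open>The 0 is inserted only to make the supremum of the empty family 0 (all values are \<ge> 0).\<close>
definition cnorm :: "(real^'n \<Rightarrow> 'e::{real_vector,t2_space}) \<Rightarrow> nat \<Rightarrow> (real^'n) set \<Rightarrow> ('e \<Rightarrow> real) \<Rightarrow> real" where
  "cnorm g r K p = Sup (insert 0 {p (ddiff g \<alpha> a) | a \<alpha>. a \<in> K \<and> length \<alpha> \<le> r \<and> set \<alpha> \<subseteq> Basis})"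

text \<open>Elementary neighbourhood N^r(f; K, (U,phi), p, eps) (target E with identity chart).\<close>
definition elem_nbhd :: "('m::t2_space set \<times> ('m \<Rightarrow> real^'n)) set \<Rightarrow> ('m \<Rightarrow> 'e::{real_vector,t2_space})
     \<Rightarrow> 'm set \<Rightarrow> ('m set \<times> ('m \<Rightarrow> real^'n)) \<Rightarrow> ('e \<Rightarrow> real) \<Rightarrow> nat \<Rightarrow> real \<Rightarrow> ('m \<Rightarrow> 'e) set" where
  "elem_nbhd A f K c p r \<epsilon> =
     {h. smooth_map A h \<and>
         cnorm (\<lambda>x. h (inv_into (fst c) (snd c) x) - f (inv_into (fst c) (snd c) x)) r (snd c ` K) p < \<epsilon>}"

definition elem_data_ok :: "('m::t2_space set \<times> ('m \<Rightarrow> real^'n)) set \<Rightarrow>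
     ('m set \<times> ('m set \<times> ('m \<Rightarrow> real^'n)) \<times> ('e::{real_vector,t2_space} \<Rightarrow> real) \<times> nat \<times> real) \<Rightarrow> bool" where
  "elem_data_ok A s = (case s of (K, c, p, r, \<epsilon>) \<Rightarrow>
     manifold_chart A c \<and> compact K \<and> K \<subseteq> fst c \<and> continuous_seminorm p \<and> \<epsilon> > 0)"

definition basic_nbhd :: "('m::t2_space set \<times> ('m \<Rightarrow> real^'n)) set \<Rightarrow> ('m \<Rightarrow> 'e::{real_vector,t2_space}) \<Rightarrow> ('m \<Rightarrow> 'e) set \<Rightarrow> bool" where
  "basic_nbhd A f B \<longleftrightarrow> smooth_map A f \<and>
     (\<exists>S :: ('m set \<times> ('m set \<times> ('m \<Rightarrow> real^'n)) \<times> ('e \<Rightarrow> real) \<times> nat \<times> real) set.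
        (\<forall>s\<in>S. elem_data_ok A s) \<and>
        (\<forall>x. \<exists>W. open W \<and> x \<in> W \<and> finite {s\<in>S. fst s \<inter> W \<noteq> {}}) \<and>
        B = {h. smooth_map A h} \<inter>
            (\<Inter>s\<in>S. case s of (K, c, p, r, \<epsilon>) \<Rightarrow> elem_nbhd A f K c p r \<epsilon>))"

definition vS_open :: "('m::t2_space set \<times> ('m \<Rightarrow> real^'n)) set \<Rightarrow> ('m \<Rightarrow> 'e::{real_vector,t2_space}) set \<Rightarrow> bool" where
  "vS_open A Q \<longleftrightarrow> Q \<subseteq> {h. smooth_map A h} \<and>
     (\<forall>h\<in>Q. \<exists>f B. basic_nbhd A f B \<and> h \<in> B \<and> B \<subseteq> Q)"

definition vS_tendsto :: "('m::t2_space set \<times> ('m \<Rightarrow> real^'n)) set \<Rightarrow> (nat \<Rightarrow> 'm \<Rightarrow> 'e::{real_vector,t2_space}) \<Rightarrow> ('m \<Rightarrow> 'e) \<Rightarrow> bool" where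
  "vS_tendsto A fs f \<longleftrightarrow> (\<forall>Q. vS_open A Q \<and> f \<in> Q \<longrightarrow> (\<forall>\<^sub>F n in sequentially. fs n \<in> Q))"

end

theory Submission
  imports Defs
begin

text \<open>Suppose the supports of \<open>f\<^sub>n - f\<close> are not eventually contained in a fixed compact set.
  Along a compact exhaustion \<open>D\<^sub>0 \<subseteq> D\<^sub>1 \<subseteq> \<dots>\<close> of \<open>M\<close> one then finds \<open>n\<^sub>k \<ge> k\<close> and points
  \<open>y\<^sub>k \<notin> D\<^sub>k\<close> with \<open>f\<^sub>n\<^sub>k(y\<^sub>k) \<noteq> f(y\<^sub>k)\<close>; the singletons \<open>{y\<^sub>k}\<close> form a locally finite family.
  Choosing for each \<open>k\<close> a seminorm \<open>p\<^sub>k\<close> that detects \<open>f\<^sub>n\<^sub>k(y\<^sub>k) - f(y\<^sub>k)\<close>, the order-0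
  conditions \<open>p\<^sub>k(h(y\<^sub>k) - f(y\<^sub>k)) < p\<^sub>k(f\<^sub>n\<^sub>k(y\<^sub>k) - f(y\<^sub>k))\<close> define a basic neighbourhood
  of \<open>f\<close> that contains no \<open>f\<^sub>n\<^sub>k\<close>, contradicting convergence.\<close>

lemma seminorm_zero: "seminorm p \<Longrightarrow> p 0 = 0"
  unfolding seminorm_def by (metis abs_zero mult_zero_left scale_zero_left)

lemma seminorm_minus: "seminorm p \<Longrightarrow> p (- x) = p x"
  unfolding seminorm_def by (metis abs_minus_cancel abs_one mult_1 scaleR_minus1_left)

lemma seminorm_nonneg:
  assumes "seminorm p"
  shows "p x \<ge> 0"
proof -
  have "p (x + - x) \<le> p x + p (- x)" using assms unfolding seminorm_def by blast
  thus ?thesis using seminorm_zero[OF assms] seminorm_minus[OF assms, of x] by simp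
qed

lemma seminorm_abs_diff_le:
  assumes "seminorm p"
  shows "\<bar>p y - p x\<bar> \<le> p (y - x)"
proof -
  have "p (x + (y - x)) \<le> p x + p (y - x)" "p (y + (x - y)) \<le> p y + p (x - y)"
    using assms unfolding seminorm_def by blast+
  moreover have "p (x - y) = p (y - x)" using seminorm_minus[OF assms, of "y - x"] by simp
  ultimately show ?thesis by simp
qed

lemma continuous_on_seminorm_generating:
  assumes top: "\<forall>U :: 'e::{real_vector,t2_space} set. open U \<longleftrightarrow>
           (\<forall>x\<in>U. \<exists>F. finite F \<and> F \<subseteq> P \<and> (\<exists>\<epsilon>>0. {y. \<forall>p\<in>F. p (y - x) < \<epsilon>} \<subseteq> U))"
    and "p \<in> P" and "seminorm p"
  shows "continuous_on UNIV p"
  unfolding continuous_on_open_vimage[OF open_UNIV]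
proof (intro allI impI)
  fix B :: "real set" assume B: "open B"
  have "\<exists>F. finite F \<and> F \<subseteq> P \<and> (\<exists>\<epsilon>>0. {y. \<forall>q\<in>F. q (y - x) < \<epsilon>} \<subseteq> p -` B)"
    if "x \<in> p -` B" for x
  proof -
    obtain e where e: "e > 0" "ball (p x) e \<subseteq> B" using B openE \<open>x \<in> p -` B\<close> by blast
    have "{y. \<forall>q\<in>{p}. q (y - x) < e} \<subseteq> p -` B"
    proof
      fix y assume "y \<in> {y. \<forall>q\<in>{p}. q (y - x) < e}"
      hence "dist (p y) (p x) < e"
        using seminorm_abs_diff_le[OF assms(3), of y x] by (simp add: dist_real_def)
      thus "y \<in> p -` B" using e by (auto simp: dist_commute)
    qed
    thus ?thesis using e assms(2) by (intro exI[of _ "{p}"]) auto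
  qed
  thus "open (p -` B \<inter> UNIV)" using top by simp
qed

lemma locally_convex_space_separating_seminorm:
  assumes "locally_convex_space TYPE('e::{real_vector,t2_space})" and "(x::'e) \<noteq> 0"
  shows "\<exists>p. continuous_seminorm p \<and> p x > 0"
proof -
  from assms(1) obtain P :: "('e \<Rightarrow> real) set" where
    "(\<forall>p\<in>P. seminorm p) \<and> (\<forall>x. x \<noteq> 0 \<longrightarrow> (\<exists>p\<in>P. p x \<noteq> 0)) \<and>
     (\<forall>U :: 'e set. open U \<longleftrightarrow>
        (\<forall>x\<in>U. \<exists>F. finite F \<and> F \<subseteq> P \<and> (\<exists>\<epsilon>>0. {y. \<forall>p\<in>F. p (y - x) < \<epsilon>} \<subseteq> U)))"
    unfolding locally_convex_space_def ..
  then have sn: "\<forall>p\<in>P. seminorm p" and sep: "\<forall>x. x \<noteq> 0 \<longrightarrow> (\<exists>p\<in>P. p x \<noteq> 0)"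
    and top: "\<forall>U :: 'e set. open U \<longleftrightarrow>
        (\<forall>x\<in>U. \<exists>F. finite F \<and> F \<subseteq> P \<and> (\<exists>\<epsilon>>0. {y. \<forall>p\<in>F. p (y - x) < \<epsilon>} \<subseteq> U))"
    by (fact conjunct1, fact conjunct2[THEN conjunct1], fact conjunct2[THEN conjunct2])
  obtain p where p: "p \<in> P" "p x \<noteq> 0" using sep assms(2) by blast
  have "continuous_seminorm p"
    using sn p(1) continuous_on_seminorm_generating[OF top p(1)] unfolding continuous_seminorm_def by blast
  moreover have "p x > 0" using seminorm_nonneg[of p x] sn p by fastforce
  ultimately show ?thesis by blast
qed

lemma cnorm_order0_singleton: "cnorm g 0 {a} p = max 0 (p (g a))"
proof -
  have "{p (ddiff g \<alpha> a') | a' \<alpha>. a' \<in> {a} \<and> length \<alpha> \<le> 0 \<and> set \<alpha> \<subseteq> Basis} = {p (g a)}"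
    by auto
  thus ?thesis unfolding cnorm_def by (simp add: cSup_insert max_def sup_real_def)
qed

lemma elem_nbhd_order0_singleton:
  assumes "is_chart c" "y \<in> fst c" "\<epsilon> > 0"
  shows "elem_nbhd A f {y} c p 0 \<epsilon> = {h. smooth_map A h \<and> p (h y - f y) < \<epsilon>}"
proof -
  have "inv_into (fst c) (snd c) (snd c y) = y"
    using assms(1,2) unfolding is_chart_def by (blast intro: homeomorphism_apply1)
  thus ?thesis using assms(3) unfolding elem_nbhd_def by (auto simp: cnorm_order0_singleton)
qed

lemma is_chart_compact_nbhd:
  assumes "is_chart c" "x \<in> fst c"
  shows "\<exists>W C. open W \<and> x \<in> W \<and> W \<subseteq> C \<and> compact C"
proof -
  define U \<phi> where "U = fst c" and "\<phi> = snd c"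
  define \<psi> where "\<psi> = inv_into U \<phi>"
  have oU: "open U" and oV: "open (\<phi> ` U)" and h: "homeomorphism (\<phi> ` U) U \<psi> \<phi>"
    using assms(1) homeomorphism_sym unfolding is_chart_def U_def \<phi>_def \<psi>_def by auto
  have xU: "x \<in> U" using assms(2) U_def by simp
  then obtain e where e: "e > 0" "cball (\<phi> x) e \<subseteq> \<phi> ` U"
    using oV open_contains_cball by blast
  have "openin (top_of_set (\<phi> ` U)) (ball (\<phi> x) e)"
    using e by (intro open_openin_trans[OF oV]) auto
  hence "openin (top_of_set U) (\<psi> ` ball (\<phi> x) e)"
    by (rule homeomorphism_imp_open_map[OF h])
  hence "open (\<psi> ` ball (\<phi> x) e)" using oU openin_open_trans by blast
  moreover have "compact (\<psi> ` cball (\<phi> x) e)"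
    using h e(2) unfolding homeomorphism_def
    by (intro compact_continuous_image) (auto intro: continuous_on_subset)
  moreover have "x \<in> \<psi> ` ball (\<phi> x) e"
    using h xU e unfolding homeomorphism_def by (metis centre_in_ball image_eqI)
  ultimately show ?thesis by (intro exI[of _ "\<psi> ` ball (\<phi> x) e"] exI[of _ "\<psi> ` cball (\<phi> x) e"]) auto
qed

lemma smooth_manifold_compact_nbhd:
  fixes x :: "'m::t2_space"
  assumes "smooth_manifold (A :: ('m set \<times> ('m \<Rightarrow> real^'n)) set)"
  shows "\<exists>W C. open W \<and> x \<in> W \<and> W \<subseteq> C \<and> compact C"
proof -
  obtain c where c: "c \<in> A" "x \<in> fst c" using assms unfolding smooth_manifold_def by blast
  moreover from c(1) have "is_chart c" using assms unfolding smooth_manifold_def by blast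
  ultimately show ?thesis by (blast intro: is_chart_compact_nbhd)
qed

lemma smooth_manifold_atlas_chart:
  assumes "smooth_manifold A" "c \<in> A"
  shows "manifold_chart A c"
  using assms unfolding smooth_manifold_def manifold_chart_def by blast

lemma compact_set_compact_nbhd:
  fixes L :: "'m::topological_space set"
  assumes "\<And>x::'m. \<exists>W C. open W \<and> x \<in> W \<and> W \<subseteq> C \<and> compact C" "compact L"
  shows "\<exists>W C. open W \<and> L \<subseteq> W \<and> W \<subseteq> C \<and> compact C"
proof -
  obtain Wf Cf where wc: "\<And>x::'m. open (Wf x) \<and> x \<in> Wf x \<and> Wf x \<subseteq> Cf x \<and> compact (Cf x)"
    using assms(1) by metis
  have "\<And>x. x \<in> L \<Longrightarrow> open (Wf x)" "L \<subseteq> (\<Union>x\<in>L. Wf x)" using wc by blast+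
  then obtain L' where L': "L' \<subseteq> L" "finite L'" "L \<subseteq> (\<Union>x\<in>L'. Wf x)"
    using compactE_image[OF assms(2)] by metis
  have "open (\<Union>x\<in>L'. Wf x)" "(\<Union>x\<in>L'. Wf x) \<subseteq> (\<Union>x\<in>L'. Cf x)" "compact (\<Union>x\<in>L'. Cf x)"
    using wc L'(2) by auto
  with L'(3) show ?thesis by blast
qed

lemma compact_exhaustion:
  fixes Ks :: "nat \<Rightarrow> 'm::topological_space set"
  assumes "\<And>x::'m. \<exists>W C. open W \<and> x \<in> W \<and> W \<subseteq> C \<and> compact C"
    and "\<And>i. compact (Ks i)" and "(\<Union>i. Ks i) = UNIV"
  shows "\<exists>D :: nat \<Rightarrow> 'm set. (\<forall>k. compact (D k)) \<and> (\<forall>x. \<exists>W i. open W \<and> x \<in> W \<and> (\<forall>k\<ge>i. W \<subseteq> D k))"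
proof -
  have "\<exists>W C. open W \<and> (\<Union>j\<le>k. Ks j) \<subseteq> W \<and> W \<subseteq> C \<and> compact C" for k
    using compact_set_compact_nbhd[OF assms(1)] assms(2) by (simp add: compact_UN)
  then obtain Wk Ck where WC: "\<And>k. open (Wk k) \<and> (\<Union>j\<le>k. Ks j) \<subseteq> Wk k \<and> Wk k \<subseteq> Ck k \<and> compact (Ck k)"
    by metis
  define D where "D k = (\<Union>j\<le>k. Ck j)" for k
  have "\<forall>k. compact (D k)" unfolding D_def using WC by (simp add: compact_UN)
  moreover have "\<forall>x. \<exists>W i. open W \<and> x \<in> W \<and> (\<forall>k\<ge>i. W \<subseteq> D k)"
  proof
    fix x
    obtain i where "x \<in> Ks i" using assms(3) by blast
    hence "x \<in> Wk i" using WC[of i] by blast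
    moreover have "Wk i \<subseteq> D k" if "k \<ge> i" for k
      using WC[of i] that unfolding D_def by fastforce
    ultimately show "\<exists>W i. open W \<and> x \<in> W \<and> (\<forall>k\<ge>i. W \<subseteq> D k)"
      using WC[of i] by blast
  qed
  ultimately show ?thesis by (intro exI[of _ D]) simp
qed

lemma escaping_sequence_locally_finite:
  fixes D :: "nat \<Rightarrow> 'm::topological_space set"
  assumes "\<And>x. \<exists>W i. open W \<and> x \<in> W \<and> (\<forall>k\<ge>i. W \<subseteq> D k)" and "\<And>k. y k \<notin> D k"
  shows "\<exists>W. open W \<and> x \<in> W \<and> finite {k. y k \<in> W}"
proof -
  obtain W i where W: "open W" "x \<in> W" "\<forall>k\<ge>i. W \<subseteq> D k" using assms(1) by blast
  have "{k. y k \<in> W} \<subseteq> {..<i}"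
  proof
    fix k assume "k \<in> {k. y k \<in> W}"
    thus "k \<in> {..<i}" using W(3) assms(2)[of k] by (metis lessThan_iff mem_Collect_eq not_le subsetD)
  qed
  hence "finite {k. y k \<in> W}" by (rule finite_subset) simp
  thus ?thesis using W(1,2) by blast
qed

lemma basic_nbhd_pointwise:
  assumes "smooth_map A f"
    and "\<And>k. manifold_chart A (c k) \<and> y k \<in> fst (c k) \<and> continuous_seminorm (p k) \<and> \<epsilon> k > 0"
    and "\<And>x. \<exists>W. open W \<and> x \<in> W \<and> finite {k. y k \<in> W}"
  shows "basic_nbhd A f {h. smooth_map A h \<and> (\<forall>k. p k (h (y k) - f (y k)) < \<epsilon> k)}"
  unfolding basic_nbhd_def
proof (intro conjI assms(1) exI[of _ "range (\<lambda>k. ({y k}, c k, p k, 0, \<epsilon> k))"])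
  let ?g = "\<lambda>k. ({y k}, c k, p k, 0::nat, \<epsilon> k)"
  show "\<forall>s\<in>range ?g. elem_data_ok A s"
    using assms(2) unfolding elem_data_ok_def by auto
  show "\<forall>x. \<exists>W. open W \<and> x \<in> W \<and> finite {s\<in>range ?g. fst s \<inter> W \<noteq> {}}"
  proof
    fix x
    obtain W where W: "open W" "x \<in> W" "finite {k. y k \<in> W}" using assms(3) by blast
    have "{s\<in>range ?g. fst s \<inter> W \<noteq> {}} \<subseteq> ?g ` {k. y k \<in> W}" by auto
    thus "\<exists>W. open W \<and> x \<in> W \<and> finite {s\<in>range ?g. fst s \<inter> W \<noteq> {}}"
      using W finite_surj by blast
  qed
  have "is_chart (c k)" for k using assms(2) unfolding manifold_chart_def by blast
  thus "{h. smooth_map A h \<and> (\<forall>k. p k (h (y k) - f (y k)) < \<epsilon> k)} =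
        {h. smooth_map A h} \<inter> (\<Inter>s\<in>range ?g. case s of (K, c, p, r, \<epsilon>) \<Rightarrow> elem_nbhd A f K c p r \<epsilon>)"
    using assms(2) by (auto simp: elem_nbhd_order0_singleton)
qed

lemma basic_nbhd_vS_open: "basic_nbhd A f B \<Longrightarrow> vS_open A B"
  unfolding vS_open_def by (auto simp: basic_nbhd_def)

theorem proposition3p1:
  fixes A :: "('m::t2_space set \<times> ('m \<Rightarrow> real^'n)) set"
    and fs :: "nat \<Rightarrow> 'm \<Rightarrow> 'e::{real_vector,t2_space}"
    and f :: "'m \<Rightarrow> 'e"
  assumes "smooth_manifold A"
    and "locally_convex_space TYPE('e)"
    and "\<And>n. smooth_map A (fs n)"
    and "smooth_map A f"
    and "vS_tendsto A fs f"
  shows "\<exists>K N. compact K \<and> (\<forall>n\<ge>N. {y. fs n y \<noteq> f y} \<subseteq> K)"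
proof (rule ccontr)
  assume neg: "\<not> ?thesis"
  obtain Ks :: "nat \<Rightarrow> 'm set" where "\<And>i. compact (Ks i)" "(\<Union>i. Ks i) = UNIV"
    using assms(1) unfolding smooth_manifold_def by blast
  then obtain D :: "nat \<Rightarrow> 'm set" where
    D: "\<And>k. compact (D k)" "\<And>x. \<exists>W i. open W \<and> x \<in> W \<and> (\<forall>k\<ge>i. W \<subseteq> D k)"
    using compact_exhaustion[OF smooth_manifold_compact_nbhd[OF assms(1)]] by metis
  have "\<exists>n y. n \<ge> k \<and> fs n y \<noteq> f y \<and> y \<notin> D k" for k
    using neg D(1) by blast
  then obtain n y where ny: "\<And>k. n k \<ge> k \<and> fs (n k) (y k) \<noteq> f (y k) \<and> y k \<notin> D k"
    by metis
  have "\<exists>c p. c \<in> A \<and> y k \<in> fst c \<and> continuous_seminorm p \<and> p (fs (n k) (y k) - f (y k)) > 0" for k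
    using assms(1) locally_convex_space_separating_seminorm[OF assms(2)] ny
    unfolding smooth_manifold_def by (metis UN_E UNIV_I right_minus_eq)
  then obtain c p where cp: "\<And>k. c k \<in> A \<and> y k \<in> fst (c k) \<and> continuous_seminorm (p k)
                              \<and> p k (fs (n k) (y k) - f (y k)) > 0"
    by metis
  define B where "B = {h. smooth_map A h \<and> (\<forall>k. p k (h (y k) - f (y k)) < p k (fs (n k) (y k) - f (y k)))}"
  have "basic_nbhd A f B"
    unfolding B_def using cp ny
    by (intro basic_nbhd_pointwise assms(4) escaping_sequence_locally_finite[OF D(2)])
       (auto intro: smooth_manifold_atlas_chart[OF assms(1)])
  moreover have "f \<in> B"
    unfolding B_def using assms(4) cp by (simp add: seminorm_zero continuous_seminorm_def)
  ultimately have "\<forall>\<^sub>F m in sequentially. fs m \<in> B"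
    using assms(5) basic_nbhd_vS_open unfolding vS_tendsto_def by blast
  then obtain N where "fs (n N) \<in> B" using ny unfolding eventually_sequentially by blast
  thus False unfolding B_def by blast
qed

end
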